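(* Let $a$ be an integer, $d\ge1$ an integer and $x\ge6$ real. Then $$0<\rho(a,d)-A\sum_{\substack{1\le t\le x\\ t\equiv a\pmod d}}r(t)<\frac{1.28}{x}.$$
   Context: $A=\prod_p\bigl(1-\frac{1}{p(p-1)}\bigr)$ (product over primes), $r(t)=\frac{1}{t^2}\prod_{p\mid t}\frac{p^2-1}{p^2-p-1}$, and $\rho(a,d)=A\sum_{t\ge1,\ t\equiv a\pmod d}r(t)$ (the average over primes $p$ of the proportion of elements of $\mathbb F_p^*$ with index $[\mathbb F_p^*:\langle x\rangle]\equiv a\pmod d$). *)

theory Defs
  imports "HOL-Analysis.Analysis" "HOL-Number_Theory.Number_Theory"
begin

definition artinA :: real where
  "artinA = (\<Prod>n. if prime n then 1 - 1 / (real n * (real n - 1)) else 1)"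

definition rfun :: "nat \<Rightarrow> real" where
  "rfun t = (1 / (real t)^2) *
     (\<Prod>p\<in>prime_factors t. ((real p)^2 - 1) / ((real p)^2 - real p - 1))"

definition rho :: "int \<Rightarrow> int \<Rightarrow> real" where
  "rho a d = artinA * infsum rfun {t::nat. 1 \<le> t \<and> [int t = a] (mod d)}"

end

theory Submission
  imports Defs
begin

(* Write rfun t = t^-2 * prod_{p | t} (1 + r_excess p) and expand the product over the sets U
   of prime divisors of t.  Substituting t = k m with k = prod U turns the tail
   n * sum_{t >= n} rfun t into a sum over sets U of primes of
   subset_weight U * (n/k) * sum_{m >= n/k} m^-2, and the last factor is at most
   1 + tail_excess (n/k).  The constant parts add up to prod_p (1 + 1 / (p^2 - p - 1)), which is
   exactly 1 / artinA.  Grouping the primes 2, 3, 5 into Psi, with Psi y * sqrt y <= 1.35 checked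
   interval by interval, bounds the remaining parts by
   1.35 / sqrt n * prod_{p > 5} (1 + sqrt p / (p^2 - p - 1)); multiplied by artinA this is at most
   1.35 / sqrt n * 19/48 * exp (sum_{p > 5} sqrt_excess p), and the last sum is below 0.275.
   Hence artinA * n * tail <= 1.275 for n >= 7, and n = floor x + 1 > x gives the upper bound;
   the lower bound holds because the residue class contains some t > x. *)

lemma sum_Pow_Un:
  assumes "finite A" "finite B" "A \<inter> B = {}"
  shows "(\<Sum>V\<in>Pow (A \<union> B). f V) = (\<Sum>U\<in>Pow B. \<Sum>S\<in>Pow A. f (S \<union> U))"
proof -
  have bij: "bij_betw (\<lambda>(S, U). S \<union> U) (Pow A \<times> Pow B) (Pow (A \<union> B))"
    by (rule bij_betw_byWitness[where f' = "\<lambda>V. (V \<inter> A, V \<inter> B)"]) (use assms in auto)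
  have "(\<Sum>V\<in>Pow (A \<union> B). f V) = (\<Sum>(S, U)\<in>Pow A \<times> Pow B. f (S \<union> U))"
    using sum.reindex_bij_betw[OF bij, of f] by (simp add: case_prod_unfold)
  also have "\<dots> = (\<Sum>S\<in>Pow A. \<Sum>U\<in>Pow B. f (S \<union> U))"
    by (rule sum.cartesian_product[symmetric])
  finally show ?thesis by (rule trans[OF _ sum.swap])
qed

lemma sum_Pow_insert:
  assumes "finite A" "a \<notin> A"
  shows "(\<Sum>V\<in>Pow (insert a A). f V) = (\<Sum>U\<in>Pow A. f U + f (insert a U))"
  using sum_Pow_Un[of "{a}" A f] assms by (simp add: Pow_insert sum.distrib add.commute)

lemma real_sqrt_prod: "sqrt (\<Prod>x\<in>A. f x) = (\<Prod>x\<in>A. sqrt (f x))"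
  by (induction A rule: infinite_finite_induct) (auto simp: real_sqrt_mult)

section \<open>The local factors of r\<close>

lemma sq_minus_self_minus_1_ge_1:
  assumes "2 \<le> p"
  shows "1 \<le> (real p)^2 - real p - 1"
proof -
  have "2 * real p \<le> real p * real p" using assms by (intro mult_right_mono) auto
  then show ?thesis using assms unfolding power2_eq_square by linarith
qed

definition r_excess :: "nat \<Rightarrow> real" where
  "r_excess p = real p / ((real p)^2 - real p - 1)"

lemma r_excess_nonneg: "2 \<le> p \<Longrightarrow> 0 \<le> r_excess p"
  using sq_minus_self_minus_1_ge_1[of p] unfolding r_excess_def by simp

definition subset_weight :: "nat set \<Rightarrow> real" where
  "subset_weight U = (\<Prod>p\<in>U. 1 / ((real p)^2 - real p - 1))"

lemma subset_weight_nonneg: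
  assumes "\<forall>p\<in>U. 2 \<le> p"
  shows "0 \<le> subset_weight U"
  unfolding subset_weight_def
proof (rule prod_nonneg)
  fix p assume "p \<in> U"
  then show "0 \<le> 1 / ((real p)^2 - real p - 1)"
    using sq_minus_self_minus_1_ge_1[of p] assms by simp
qed

lemma prod_r_excess_eq: "(\<Prod>p\<in>U. r_excess p) = real (\<Prod>U) * subset_weight U"
  unfolding r_excess_def subset_weight_def by (simp add: prod_dividef)

lemma sum_Pow_subset_weight:
  assumes "finite P"
  shows "(\<Sum>U\<in>Pow P. subset_weight U) = (\<Prod>p\<in>P. 1 + 1 / ((real p)^2 - real p - 1))"
  using prod_add[of P "\<lambda>p. 1 / ((real p)^2 - real p - 1)" "\<lambda>_. 1", OF assms]
  by (simp add: subset_weight_def add.commute)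

definition sqrt_excess :: "nat \<Rightarrow> real" where
  "sqrt_excess m = (sqrt (real m) - 1) / ((real m)^2 - real m)"

lemma local_factor_mult_inverse:
  assumes "2 \<le> p"
  shows "(1 - 1 / (real p * (real p - 1))) * (1 + 1 / ((real p)^2 - real p - 1)) = 1"
proof -
  define D where "D = (real p)^2 - real p - 1"
  have "1 \<le> D" unfolding D_def by (rule sq_minus_self_minus_1_ge_1[OF assms])
  then have "1 - 1 / (D + 1) = D / (D + 1)" "1 + 1 / D = (D + 1) / D"
    by (simp_all add: field_simps)
  moreover have "real p * (real p - 1) = D + 1"
    unfolding D_def by (simp add: power2_eq_square algebra_simps)
  ultimately show ?thesis unfolding D_def[symmetric] using \<open>1 \<le> D\<close> by simp
qed

lemma local_factor_mult_sqrt: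
  assumes "2 \<le> p"
  shows "(1 - 1 / (real p * (real p - 1))) * (1 + sqrt (real p) / ((real p)^2 - real p - 1))
    = 1 + sqrt_excess p"
proof -
  define D where "D = (real p)^2 - real p - 1"
  define s where "s = sqrt (real p)"
  have "1 \<le> D" unfolding D_def by (rule sq_minus_self_minus_1_ge_1[OF assms])
  then have "1 - 1 / (D + 1) = D / (D + 1)" "1 + s / D = (D + s) / D"
    "(D + s) / (D + 1) = 1 + (s - 1) / (D + 1)"
    by (simp_all add: field_simps)
  moreover have "real p * (real p - 1) = D + 1" "(real p)^2 - real p = D + 1"
    unfolding D_def by (simp_all add: power2_eq_square algebra_simps)
  ultimately show ?thesis
    unfolding sqrt_excess_def D_def[symmetric] s_def[symmetric] using \<open>1 \<le> D\<close> by simp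
qed

lemma rfun_eq_sum_Pow:
  "rfun t = (\<Sum>U\<in>Pow (prime_factors t). \<Prod>p\<in>U. r_excess p) / (real t)^2"
proof -
  have "(\<Prod>p\<in>prime_factors t. ((real p)^2 - 1) / ((real p)^2 - real p - 1))
        = (\<Prod>p\<in>prime_factors t. r_excess p + 1)"
  proof (rule prod.cong)
    fix p assume "p \<in> prime_factors t"
    then have "1 \<le> (real p)^2 - real p - 1"
      by (intro sq_minus_self_minus_1_ge_1) (auto intro: prime_ge_2_nat)
    then show "((real p)^2 - 1) / ((real p)^2 - real p - 1) = r_excess p + 1"
      unfolding r_excess_def by (simp add: field_simps)
  qed simp
  also have "\<dots> = (\<Sum>U\<in>Pow (prime_factors t). \<Prod>p\<in>U. r_excess p)"
    by (simp add: prod_add)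
  finally show ?thesis unfolding rfun_def by simp
qed

lemma rfun_nonneg: "0 \<le> rfun t"
  unfolding rfun_eq_sum_Pow
  by (intro divide_nonneg_nonneg sum_nonneg prod_nonneg r_excess_nonneg) (auto intro: prime_ge_2_nat)

lemma rfun_pos:
  assumes "0 < t"
  shows "0 < rfun t"
proof -
  have "1 \<le> (\<Sum>U\<in>Pow (prime_factors t). \<Prod>p\<in>U. r_excess p)"
    using sum_mono2[of "Pow (prime_factors t)" "{{}}" "\<lambda>U. \<Prod>p\<in>U. r_excess p"]
    by (auto intro!: prod_nonneg r_excess_nonneg intro: prime_ge_2_nat)
  then show ?thesis unfolding rfun_eq_sum_Pow using assms by simp
qed

section \<open>The Artin constant\<close>

definition artin_factor :: "nat \<Rightarrow> real" where
  "artin_factor n = (if prime n then 1 - 1 / (real n * (real n - 1)) else 1)"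

lemma artinA_eq_prodinf: "artinA = prodinf artin_factor"
  unfolding artinA_def artin_factor_def ..

lemma prime_artin_factor_bounds:
  assumes "2 \<le> p"
  shows "1 / (real p * (real p - 1)) \<le> 1/2" "0 < 1 / (real p * (real p - 1))"
proof -
  have "2 * 1 \<le> real p * (real p - 1)" using assms by (intro mult_mono) auto
  then show "1 / (real p * (real p - 1)) \<le> 1/2" "0 < 1 / (real p * (real p - 1))"
    by (simp_all add: field_simps)
qed

lemma prod_artin_factors_nonneg:
  assumes "\<forall>p\<in>P. prime p"
  shows "0 \<le> (\<Prod>p\<in>P. 1 - 1 / (real p * (real p - 1)))"
proof (rule prod_nonneg)
  fix p assume "p \<in> P"
  then have "1 / (real p * (real p - 1)) \<le> 1/2"
    using assms by (intro prime_artin_factor_bounds(1) prime_ge_2_nat) simp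
  then show "0 \<le> 1 - 1 / (real p * (real p - 1))" by simp
qed

lemma artin_factor_pos: "0 < artin_factor n"
  using prime_artin_factor_bounds[of n] prime_ge_2_nat[of n] unfolding artin_factor_def by auto

lemma artin_factor_le_1: "artin_factor n \<le> 1"
  using prime_artin_factor_bounds[of n] prime_ge_2_nat[of n] unfolding artin_factor_def by auto

lemma convergent_prod_artin_factor: "convergent_prod artin_factor"
proof -
  have "summable (\<lambda>n. norm (artin_factor n - 1))"
  proof (rule summable_comparison_test')
    show "summable (\<lambda>n. 2 * inverse (real n ^ 2))"
      by (intro summable_mult inverse_power_summable) auto
    fix n :: nat assume "2 \<le> n"
    then have "1 / (real n * (real n - 1)) \<le> 2 * inverse (real n ^ 2)"
      by (simp add: field_simps power2_eq_square)
    then show "norm (norm (artin_factor n - 1)) \<le> 2 * inverse (real n ^ 2)"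
      using prime_artin_factor_bounds(2)[OF \<open>2 \<le> n\<close>] unfolding artin_factor_def by auto
  qed
  then show ?thesis
    by (intro abs_convergent_prod_imp_convergent_prod summable_imp_abs_convergent_prod)
qed

lemma partial_products_tendsto_artinA: "(\<lambda>n. \<Prod>i\<le>n. artin_factor i) \<longlonglongrightarrow> artinA"
  unfolding artinA_eq_prodinf by (rule convergent_prod_LIMSEQ[OF convergent_prod_artin_factor])

lemma artinA_pos: "0 < artinA"
proof -
  have "artinA \<noteq> 0" unfolding artinA_eq_prodinf
    by (rule prodinf_nonzero[OF convergent_prod_artin_factor]) (metis artin_factor_pos less_irrefl)
  moreover have "0 \<le> artinA"
    by (rule LIMSEQ_le_const[OF partial_products_tendsto_artinA])
       (auto intro!: prod_nonneg less_imp_le[OF artin_factor_pos])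
  ultimately show ?thesis by simp
qed

lemma artinA_le_prod_primes:
  "artinA \<le> (\<Prod>p | p \<le> M \<and> prime p. 1 - 1 / (real p * (real p - 1)))"
proof -
  have "decseq (\<lambda>n. \<Prod>i\<le>n. artin_factor i)"
    by (rule decseq_SucI)
       (simp add: mult_left_le artin_factor_le_1 prod_nonneg less_imp_le[OF artin_factor_pos])
  then have "artinA \<le> (\<Prod>i\<le>M. artin_factor i)"
    by (rule decseq_ge[OF _ partial_products_tendsto_artinA])
  also have "\<dots> = (\<Prod>p | p \<le> M \<and> prime p. 1 - 1 / (real p * (real p - 1)))"
    unfolding artin_factor_def by (subst prod.inter_filter[symmetric]) auto
  finally show ?thesis .
qed

section \<open>Tails of sums of inverse squares\<close>

lemma inverse_square_le_telescope:
  assumes "1 \<le> m"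
  shows "1 / (real m)^2 \<le> 1 / (real m - 1/2) - 1 / (real m + 1/2)"
proof -
  have "1 \<le> real m" using assms by simp
  then have "1 / (real m - 1/2) - 1 / (real m + 1/2) = 1 / ((real m)^2 - 1/4)"
    by (simp add: field_simps power2_eq_square)
  moreover have "1 \<le> (real m)^2" using \<open>1 \<le> real m\<close> by (simp add: one_le_power)
  then have "1 / (real m)^2 \<le> 1 / ((real m)^2 - 1/4)" by (intro frac_le) auto
  ultimately show ?thesis by simp
qed

lemma sum_inverse_squares_interval_le:
  assumes "1 \<le> j"
  shows "(\<Sum>m=j..<j+i. 1 / (real m)^2) \<le> 1 / (real j - 1/2) - 1 / (real (j+i) - 1/2)"
proof (induction i)
  case (Suc i)
  then show ?case
    using inverse_square_le_telescope[of "j+i"] assms by (simp add: ac_simps)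
qed simp

lemma sum_inverse_squares_le:
  assumes "finite F" "\<forall>m\<in>F. j \<le> m" "1 \<le> j"
  shows "(\<Sum>m\<in>F. 1 / (real m)^2) \<le> 1 / (real j - 1/2)"
proof -
  obtain k where "F \<subseteq> {..<k}" using finite_nat_bounded[OF assms(1)] by blast
  then have "F \<subseteq> {j..<j+k}" using assms(2) by auto
  then have "(\<Sum>m\<in>F. 1 / (real m)^2) \<le> (\<Sum>m=j..<j+k. 1 / (real m)^2)"
    by (intro sum_mono2) auto
  also have "\<dots> \<le> 1 / (real j - 1/2) - 1 / (real (j+k) - 1/2)"
    by (rule sum_inverse_squares_interval_le[OF assms(3)])
  also have "\<dots> \<le> 1 / (real j - 1/2)" using assms(3) by simp
  finally show ?thesis .
qed

lemma sum_inverse_squares_le_165: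
  assumes "finite F" "0 \<notin> F"
  shows "(\<Sum>m\<in>F. 1 / (real m)^2) \<le> 1.65"
proof -
  have "(\<Sum>m\<in>F. 1 / (real m)^2) \<le> (\<Sum>m\<in>F \<union> {1,2}. 1 / (real m)^2)"
    by (rule sum_mono2) (use assms in auto)
  also have "\<dots> = (\<Sum>m\<in>(F \<union> {1,2}) - {1,2}. 1 / (real m)^2) + (\<Sum>m\<in>{1,2}. 1 / (real m)^2)"
    by (rule sum.subset_diff) (use assms in auto)
  also have "\<forall>m\<in>(F \<union> {1,2}) - {1,2}. 3 \<le> m"
  proof
    fix m assume "m \<in> (F \<union> {1,2}) - {1,2}"
    then have "m \<in> F" "m \<noteq> 1" "m \<noteq> 2" by auto
    moreover have "m \<noteq> 0" using \<open>m \<in> F\<close> assms(2) by metis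
    ultimately show "3 \<le> m" by presburger
  qed
  then have "(\<Sum>m\<in>(F \<union> {1,2}) - {1,2}. 1 / (real m)^2) \<le> 1 / (real 3 - 1/2)"
    by (intro sum_inverse_squares_le) (use assms in auto)
  finally show ?thesis by (simp add: power2_eq_square)
qed

definition tail_excess :: "real \<Rightarrow> real" where
  "tail_excess y =
     (if y \<le> 1 then 1.65 * y - 1 else if y \<le> 2 then 2 * y / 3 - 1 else 1 / (2 * y - 1))"

lemma scaled_sum_inverse_squares_le:
  assumes "0 < y" "finite F" "\<forall>m\<in>F. y \<le> real m"
  shows "y * (\<Sum>m\<in>F. 1 / (real m)^2) \<le> 1 + tail_excess y"
proof -
  have "0 \<notin> F" using assms by auto
  consider "y \<le> 1" | "1 < y" "y \<le> 2" | "2 < y" by linarith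
  then show ?thesis
  proof cases
    case 1
    have "y * (\<Sum>m\<in>F. 1 / (real m)^2) \<le> y * 1.65"
      using sum_inverse_squares_le_165[OF assms(2) \<open>0 \<notin> F\<close>] assms by (intro mult_left_mono) auto
    then show ?thesis using 1 by (simp add: tail_excess_def)
  next
    case 2
    have "\<forall>m\<in>F. 2 \<le> m" using assms 2 by force
    then have "(\<Sum>m\<in>F. 1 / (real m)^2) \<le> 1 / (real 2 - 1/2)"
      by (intro sum_inverse_squares_le[OF assms(2)]) auto
    then have "y * (\<Sum>m\<in>F. 1 / (real m)^2) \<le> y * (2/3)"
      using assms by (intro mult_left_mono) auto
    then show ?thesis using 2 by (simp add: tail_excess_def)
  next
    case 3
    define j where "j = nat \<lceil>y\<rceil>"
    have "y \<le> real j" unfolding j_def by linarith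
    have "\<forall>m\<in>F. j \<le> m" unfolding j_def using assms by (auto simp: nat_le_iff ceiling_le_iff)
    then have "(\<Sum>m\<in>F. 1 / (real m)^2) \<le> 1 / (real j - 1/2)"
      by (intro sum_inverse_squares_le[OF assms(2)]) (use \<open>y \<le> real j\<close> 3 in auto)
    also have "\<dots> \<le> 1 / (y - 1/2)" using \<open>y \<le> real j\<close> 3 by (intro divide_left_mono) auto
    finally have "y * (\<Sum>m\<in>F. 1 / (real m)^2) \<le> y * (1 / (y - 1/2))"
      using assms by (intro mult_left_mono) auto
    also have "\<dots> = 1 + 1 / (2 * y - 1)" using 3 by (simp add: field_simps)
    finally show ?thesis using 3 by (simp add: tail_excess_def)
  qed
qed

lemma scaled_sum_inverse_squares_multiples_le:
  assumes "0 < k" "0 < n"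
  shows "real n * (\<Sum>t | t \<in> {n..M} \<and> k dvd t. 1 / (real t)^2)
    \<le> (1 + tail_excess (real n / real k)) / real k"
proof -
  define F where "F = {m. m \<le> M \<and> n \<le> k * m}"
  have "finite F" unfolding F_def by auto
  have "{t. t \<in> {n..M} \<and> k dvd t} \<subseteq> (\<lambda>m. k * m) ` F"
  proof
    fix t assume t: "t \<in> {t. t \<in> {n..M} \<and> k dvd t}"
    then obtain m where m: "t = k * m" by blast
    have "m \<le> k * m" using mult_le_mono1[of 1 k m] assms(1) by simp
    also have "\<dots> \<le> M" using t m by simp
    finally have "m \<in> F" using t m unfolding F_def by auto
    then show "t \<in> (\<lambda>m. k * m) ` F" using m by blast
  qed
  then have "(\<Sum>t | t \<in> {n..M} \<and> k dvd t. 1 / (real t)^2)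
      \<le> (\<Sum>t\<in>(\<lambda>m. k * m) ` F. 1 / (real t)^2)"
    by (intro sum_mono2) (use \<open>finite F\<close> in auto)
  also have "\<dots> = (\<Sum>m\<in>F. 1 / (real m)^2) / (real k)^2"
    using assms by (simp add: sum.reindex inj_on_def sum_divide_distrib power_mult_distrib mult.commute)
  finally have "real n * (\<Sum>t | t \<in> {n..M} \<and> k dvd t. 1 / (real t)^2)
      \<le> real n * ((\<Sum>m\<in>F. 1 / (real m)^2) / (real k)^2)"
    by (rule mult_left_mono) simp
  also have "\<dots> = (real n / real k * (\<Sum>m\<in>F. 1 / (real m)^2)) / real k"
    by (simp add: power2_eq_square)
  also have "\<dots> \<le> (1 + tail_excess (real n / real k)) / real k"
  proof (intro divide_right_mono scaled_sum_inverse_squares_le)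
    show "\<forall>m\<in>F. real n / real k \<le> real m"
      using assms unfolding F_def by (auto simp: field_simps simp flip: of_nat_mult)
  qed (use assms \<open>finite F\<close> in auto)
  finally show ?thesis .
qed

lemma prod_dvd_of_subset_prime_factors:
  fixes t :: nat
  assumes "U \<subseteq> prime_factors t"
  shows "\<Prod>U dvd t"
proof -
  have "finite U" using assms finite_subset by blast
  then show ?thesis using assms
  proof (induction U rule: finite_induct)
    case (insert p U)
    have "coprime p (\<Prod>U)"
      by (rule prod_coprime_right) (use insert in \<open>auto intro: primes_coprime\<close>)
    then show ?case using insert by (auto intro: divides_mult)
  qed simp
qed

lemma prime_factors_subset_primes_le:
  fixes t M :: nat
  assumes "0 < t" "t \<le> M"
  shows "prime_factors t \<subseteq> {p. p \<le> M \<and> prime p}"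
proof
  fix p assume "p \<in> prime_factors t"
  then have "prime p" "p dvd t" by (auto simp: in_prime_factors_iff)
  with assms have "prime p" "p \<le> t" by (auto intro: dvd_imp_le)
  then show "p \<in> {p. p \<le> M \<and> prime p}" using assms by simp
qed

lemma scaled_sum_rfun_subset_le:
  assumes "\<forall>p\<in>U. prime p" "0 < n"
  shows "real n * (\<Sum>t | t \<in> {n..M} \<and> U \<subseteq> prime_factors t. (\<Prod>p\<in>U. r_excess p) / (real t)^2)
    \<le> subset_weight U * (1 + tail_excess (real n / real (\<Prod>U)))"
proof -
  let ?S = "{t. t \<in> {n..M} \<and> U \<subseteq> prime_factors t}"
  have "0 < \<Prod>U" "0 \<le> subset_weight U"
    using assms(1) by (auto intro!: prod_pos subset_weight_nonneg intro: prime_gt_0_nat prime_ge_2_nat)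
  have "?S \<subseteq> {t. t \<in> {n..M} \<and> \<Prod>U dvd t}"
    using prod_dvd_of_subset_prime_factors by blast
  then have "real n * (\<Sum>t\<in>?S. 1 / (real t)^2)
      \<le> real n * (\<Sum>t | t \<in> {n..M} \<and> \<Prod>U dvd t. 1 / (real t)^2)"
    by (intro mult_left_mono sum_mono2) auto
  also have "\<dots> \<le> (1 + tail_excess (real n / real (\<Prod>U))) / real (\<Prod>U)"
    by (rule scaled_sum_inverse_squares_multiples_le[OF \<open>0 < \<Prod>U\<close> assms(2)])
  finally have "real (\<Prod>U) * (real n * (\<Sum>t\<in>?S. 1 / (real t)^2))
      \<le> 1 + tail_excess (real n / real (\<Prod>U))"
    using \<open>0 < \<Prod>U\<close> by (simp add: pos_le_divide_eq mult.commute del: of_nat_prod)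
  then have "subset_weight U * (real (\<Prod>U) * (real n * (\<Sum>t\<in>?S. 1 / (real t)^2)))
      \<le> subset_weight U * (1 + tail_excess (real n / real (\<Prod>U)))"
    using \<open>0 \<le> subset_weight U\<close> by (rule mult_left_mono)
  then show ?thesis
    by (simp add: prod_r_excess_eq sum_distrib_left mult_ac)
qed

lemma scaled_sum_rfun_le:
  assumes "0 < n"
  shows "real n * (\<Sum>t=n..M. rfun t)
    \<le> (\<Sum>U\<in>Pow {p. p \<le> M \<and> prime p}. subset_weight U * (1 + tail_excess (real n / real (\<Prod>U))))"
proof -
  let ?P = "{p. p \<le> M \<and> prime p}"
  have "(\<Sum>t=n..M. rfun t)
      = (\<Sum>t=n..M. \<Sum>U | U \<in> Pow ?P \<and> U \<subseteq> prime_factors t. (\<Prod>p\<in>U. r_excess p) / (real t)^2)"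
  proof (rule sum.cong[OF refl])
    fix t assume "t \<in> {n..M}"
    then have "Pow (prime_factors t) = {U. U \<in> Pow ?P \<and> U \<subseteq> prime_factors t}"
      using prime_factors_subset_primes_le[of t M] assms by auto
    then show "rfun t
        = (\<Sum>U | U \<in> Pow ?P \<and> U \<subseteq> prime_factors t. (\<Prod>p\<in>U. r_excess p) / (real t)^2)"
      by (simp add: rfun_eq_sum_Pow sum_divide_distrib)
  qed
  also have "\<dots> = (\<Sum>U\<in>Pow ?P.
      \<Sum>t | t \<in> {n..M} \<and> U \<subseteq> prime_factors t. (\<Prod>p\<in>U. r_excess p) / (real t)^2)"
    by (rule sum.swap_restrict) auto
  finally show ?thesis
    using scaled_sum_rfun_subset_le[OF _ assms, of _ M]
    by (auto simp: sum_distrib_left intro!: sum_mono)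
qed

section \<open>The contribution of the primes 2, 3 and 5\<close>

definition Psi :: "real \<Rightarrow> real" where
  "Psi y = (\<Sum>S\<in>Pow {2,3,5}. subset_weight S * tail_excess (y / real (\<Prod>S)))"

lemma Psi_explicit:
  "Psi y = tail_excess y + tail_excess (y/2) + tail_excess (y/3) / 5 + tail_excess (y/5) / 19
    + tail_excess (y/6) / 5 + tail_excess (y/10) / 19 + tail_excess (y/15) / 95
    + tail_excess (y/30) / 95"
  unfolding Psi_def by (simp add: sum_Pow_insert subset_weight_def field_simps)

lemma sum_Pow_weighted_tail_excess_eq:
  assumes "finite L" "L \<inter> {2,3,5} = {}"
  shows "(\<Sum>V\<in>Pow ({2,3,5} \<union> L). subset_weight V * tail_excess (y / real (\<Prod>V)))
    = (\<Sum>U\<in>Pow L. subset_weight U * Psi (y / real (\<Prod>U)))"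
proof -
  let ?g = "\<lambda>V. subset_weight V * tail_excess (y / real (\<Prod>V))"
  have "(\<Sum>S\<in>Pow {2,3,5}. ?g (S \<union> U)) = subset_weight U * Psi (y / real (\<Prod>U))"
    if "U \<in> Pow L" for U
    unfolding Psi_def sum_distrib_left
  proof (rule sum.cong[OF refl])
    fix S :: "nat set" assume "S \<in> Pow {2,3,5}"
    then have "S \<inter> U = {}" "finite S" "finite U"
      using that assms by (auto intro: finite_subset)
    then show "?g (S \<union> U)
        = subset_weight U * (subset_weight S * tail_excess (y / real (\<Prod>U) / real (\<Prod>S)))"
      unfolding subset_weight_def by (simp add: prod.union_disjoint mult_ac)
  qed
  moreover have "(\<Sum>V\<in>Pow ({2,3,5} \<union> L). ?g V)
      = (\<Sum>U\<in>Pow L. \<Sum>S\<in>Pow {2,3,5}. ?g (S \<union> U))"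
    by (rule sum_Pow_Un) (use assms in auto)
  ultimately show ?thesis by simp
qed

lemma tail_excess_le_1: "tail_excess z \<le> 1"
  unfolding tail_excess_def by (auto simp: field_simps)

(* tail_excess increases on (0, 2] and decreases on [2, \<infinity>), so this bounds it on (a, b]. *)
definition tail_excess_ub :: "real \<Rightarrow> real \<Rightarrow> real" where
  "tail_excess_ub a b =
     (if b \<le> 1 then 1.65 * b - 1
      else if 1 \<le> a \<and> b \<le> 2 then 2 * b / 3 - 1
      else if 2 \<le> a then 1 / (2 * a - 1)
      else 1)"

lemma tail_excess_le_ub:
  assumes "0 \<le> a" "a < z" "z \<le> b"
  shows "tail_excess z \<le> tail_excess_ub a b"
proof -
  have "1 / (2 * z - 1) \<le> 1 / (2 * a - 1)" if "2 \<le> a"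
    using that assms by (intro divide_left_mono) auto
  then show ?thesis
    using assms tail_excess_le_1[of z] unfolding tail_excess_ub_def
    by (auto simp: tail_excess_def)
qed

definition Psi_ub :: "real \<Rightarrow> real \<Rightarrow> real" where
  "Psi_ub a b = tail_excess_ub a b + tail_excess_ub (a/2) (b/2) + tail_excess_ub (a/3) (b/3) / 5
     + tail_excess_ub (a/5) (b/5) / 19 + tail_excess_ub (a/6) (b/6) / 5
     + tail_excess_ub (a/10) (b/10) / 19 + tail_excess_ub (a/15) (b/15) / 95
     + tail_excess_ub (a/30) (b/30) / 95"

lemma Psi_le_Psi_ub:
  assumes "0 \<le> a" "a < y" "y \<le> b"
  shows "Psi y \<le> Psi_ub a b"
proof -
  have "tail_excess (y/k) \<le> tail_excess_ub (a/k) (b/k)" if "k > 0" for k :: real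
    using assms that by (intro tail_excess_le_ub) (auto simp: divide_strict_right_mono divide_right_mono)
  then show ?thesis unfolding Psi_explicit Psi_ub_def
    by (intro add_mono divide_right_mono tail_excess_le_ub[OF assms]) auto
qed

lemma Psi_mult_sqrt_le_of_interval:
  assumes "0 \<le> a" "a < y" "y \<le> b" "b \<le> s^2" "0 \<le> s" "Psi_ub a b * s \<le> 1.35"
  shows "Psi y * sqrt y \<le> 1.35"
proof (cases "Psi y \<le> 0")
  case True
  have "Psi y * sqrt y \<le> 0" using True assms by (intro mult_nonpos_nonneg) auto
  then show ?thesis by simp
next
  case False
  have "sqrt y \<le> s" using assms by (simp add: real_sqrt_le_iff')
  then have "Psi y * sqrt y \<le> Psi_ub a b * s"
    using False Psi_le_Psi_ub[OF assms(1-3)] assms(1,2) by (intro mult_mono) auto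
  then show ?thesis using assms(6) by simp
qed

lemma Psi_mult_sqrt_le_large:
  assumes "60 < y"
  shows "Psi y * sqrt y \<le> 1.35"
proof -
  have le: "tail_excess (y/k) \<le> k / y" if "0 < k" "k \<le> 30" for k :: real
  proof -
    have "2 < y / k" using assms that by (simp add: field_simps)
    then have "tail_excess (y/k) = 1 / (2 * (y/k) - 1)" by (simp add: tail_excess_def)
    also have "\<dots> \<le> 1 / (y/k)" using \<open>2 < y/k\<close> by (intro divide_left_mono mult_pos_pos) auto
    finally show ?thesis using that assms by simp
  qed
  have "tail_excess y \<le> 1 / y" using le[of 1] by simp
  then have "Psi y \<le> 1/y + 2/y + (3/y)/5 + (5/y)/19 + (6/y)/5 + (10/y)/19 + (15/y)/95 + (30/y)/95"
    unfolding Psi_explicit by (intro add_mono divide_right_mono le) auto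
  also have "\<dots> = (576/95) / y" by (simp add: field_simps)
  finally have "Psi y * sqrt y \<le> (576/95) / y * sqrt y"
    by (rule mult_right_mono) (use assms in simp)
  also have "\<dots> = (576/95) / sqrt y"
    using assms by (simp add: field_simps)
  also have "\<dots> \<le> (576/95) / 7.7"
    using assms by (intro divide_left_mono real_le_rsqrt) (auto simp: power2_eq_square)
  also have "\<dots> \<le> 1.35" by simp
  finally show ?thesis .
qed

lemma Psi_mult_sqrt_le:
  assumes "0 < y"
  shows "Psi y * sqrt y \<le> 1.35"
proof -
  note interval = Psi_mult_sqrt_le_of_interval[of _ y]
  note numerals = Psi_ub_def tail_excess_ub_def power2_eq_square
  consider "y \<le> 1" | "1 < y" "y \<le> 2" | "2 < y" "y \<le> 3" | "3 < y" "y \<le> 4" | "4 < y" "y \<le> 5"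
    | "5 < y" "y \<le> 6" | "6 < y" "y \<le> 8" | "8 < y" "y \<le> 10" | "10 < y" "y \<le> 12"
    | "12 < y" "y \<le> 15" | "15 < y" "y \<le> 20" | "20 < y" "y \<le> 30" | "30 < y" "y \<le> 60"
    | "60 < y"
    by (meson not_le)
  then show ?thesis
  proof cases
    case 1 show ?thesis by (rule interval[of 0 1 "1"]) (use 1 assms in \<open>simp_all add: numerals\<close>)
  next
    case 2 show ?thesis by (rule interval[of 1 2 "1.415"]) (use 2 in \<open>simp_all add: numerals\<close>)
  next
    case 3 show ?thesis by (rule interval[of 2 3 "1.733"]) (use 3 in \<open>simp_all add: numerals\<close>)
  next
    case 4 show ?thesis by (rule interval[of 3 4 "2"]) (use 4 in \<open>simp_all add: numerals\<close>)
  next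
    case 5 show ?thesis by (rule interval[of 4 5 "2.237"]) (use 5 in \<open>simp_all add: numerals\<close>)
  next
    case 6 show ?thesis by (rule interval[of 5 6 "2.45"]) (use 6 in \<open>simp_all add: numerals\<close>)
  next
    case 7 show ?thesis by (rule interval[of 6 8 "2.829"]) (use 7 in \<open>simp_all add: numerals\<close>)
  next
    case 8 show ?thesis by (rule interval[of 8 10 "3.163"]) (use 8 in \<open>simp_all add: numerals\<close>)
  next
    case 9 show ?thesis by (rule interval[of 10 12 "3.465"]) (use 9 in \<open>simp_all add: numerals\<close>)
  next
    case 10 show ?thesis by (rule interval[of 12 15 "3.873"]) (use 10 in \<open>simp_all add: numerals\<close>)
  next
    case 11 show ?thesis by (rule interval[of 15 20 "4.473"]) (use 11 in \<open>simp_all add: numerals\<close>)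
  next
    case 12 show ?thesis by (rule interval[of 20 30 "5.478"]) (use 12 in \<open>simp_all add: numerals\<close>)
  next
    case 13 show ?thesis by (rule interval[of 30 60 "7.746"]) (use 13 in \<open>simp_all add: numerals\<close>)
  next
    case 14 then show ?thesis by (rule Psi_mult_sqrt_le_large)
  qed
qed

lemma sum_Pow_weighted_Psi_le:
  assumes "finite L" "\<forall>p\<in>L. prime p" "0 < y"
  shows "(\<Sum>U\<in>Pow L. subset_weight U * Psi (y / real (\<Prod>U)))
    \<le> 1.35 / sqrt y * (\<Prod>p\<in>L. 1 + sqrt (real p) / ((real p)^2 - real p - 1))"
proof -
  have "subset_weight U * Psi (y / real (\<Prod>U))
      \<le> 1.35 / sqrt y * (\<Prod>p\<in>U. sqrt (real p) / ((real p)^2 - real p - 1))"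
    if "U \<in> Pow L" for U
  proof -
    have "\<forall>p\<in>U. prime p" using that assms by auto
    then have "0 < \<Prod>U" "0 \<le> subset_weight U"
      by (auto intro!: prod_pos subset_weight_nonneg intro: prime_gt_0_nat prime_ge_2_nat)
    then have "0 < real (\<Prod>U)" by (simp only: of_nat_0_less_iff)
    then have "0 < y / real (\<Prod>U)" using assms by simp
    then have "Psi (y / real (\<Prod>U)) \<le> 1.35 / sqrt (y / real (\<Prod>U))"
      using Psi_mult_sqrt_le[OF \<open>0 < y / real (\<Prod>U)\<close>] by (simp add: pos_le_divide_eq)
    then have "subset_weight U * Psi (y / real (\<Prod>U)) \<le> subset_weight U * (1.35 / sqrt (y / real (\<Prod>U)))"
      using \<open>0 \<le> subset_weight U\<close> by (rule mult_left_mono)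
    also have "\<dots> = 1.35 / sqrt y * (subset_weight U * sqrt (real (\<Prod>U)))"
      using \<open>0 < real (\<Prod>U)\<close> assms by (simp add: real_sqrt_divide)
    also have "subset_weight U * sqrt (real (\<Prod>U)) = (\<Prod>p\<in>U. sqrt (real p) / ((real p)^2 - real p - 1))"
      unfolding subset_weight_def of_nat_prod real_sqrt_prod prod.distrib[symmetric] by simp
    finally show ?thesis .
  qed
  then have "(\<Sum>U\<in>Pow L. subset_weight U * Psi (y / real (\<Prod>U)))
      \<le> (\<Sum>U\<in>Pow L. 1.35 / sqrt y * (\<Prod>p\<in>U. sqrt (real p) / ((real p)^2 - real p - 1)))"
    by (rule sum_mono)
  also have "\<dots> = 1.35 / sqrt y * (\<Prod>p\<in>L. 1 + sqrt (real p) / ((real p)^2 - real p - 1))"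
    using prod_add[of L "\<lambda>p. sqrt (real p) / ((real p)^2 - real p - 1)" "\<lambda>_. 1", OF assms(1)]
    by (simp add: sum_distrib_left add.commute)
  finally show ?thesis .
qed

section \<open>The primes beyond 5\<close>

lemma sqrt_excess_nonneg: "0 \<le> sqrt_excess m"
proof (cases "m = 0")
  case False
  then have "1 \<le> sqrt (real m)" "0 \<le> (real m)^2 - real m"
    by (simp_all add: power2_eq_square)
  then show ?thesis unfolding sqrt_excess_def by simp
qed (simp add: sqrt_excess_def)

lemma sqrt_excess_le:
  assumes "real m \<le> s^2" "0 \<le> s"
  shows "sqrt_excess m \<le> (s - 1) / ((real m)^2 - real m)"
proof -
  have "sqrt (real m) \<le> s" using assms by (simp add: real_sqrt_le_iff')
  moreover have "0 \<le> (real m)^2 - real m" by (cases m) (simp_all add: power2_eq_square)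
  ultimately show ?thesis unfolding sqrt_excess_def by (simp add: divide_right_mono)
qed

lemma sqrt_excess_le_telescope:
  assumes "3 \<le> m"
  shows "sqrt_excess m \<le> 1 / sqrt (real m - 2) - 1 / sqrt (real m)"
proof -
  define s where "s = sqrt (real m)"
  define r where "r = sqrt (real m - 2)"
  have "1 \<le> r" "r \<le> s" "1 < s" unfolding r_def s_def using assms by auto
  have s2: "real m = s^2" and r2: "real m - 2 = r^2" unfolding r_def s_def using assms by auto
  have "sqrt_excess m = (s - 1) / ((s - 1) * (s^2 * (s + 1)))"
    unfolding sqrt_excess_def s_def[symmetric] s2 using \<open>1 < s\<close>
    by (simp add: power2_eq_square algebra_simps)
  also have "\<dots> = 2 / (2 * (s^2 * (s + 1)))" using \<open>1 < s\<close> by simp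
  also have "\<dots> \<le> 2 / (r * s * (s + r))"
  proof (rule frac_le)
    have "r * s * (s + r) \<le> s * s * (s + s)"
      using \<open>1 \<le> r\<close> \<open>r \<le> s\<close> by (intro mult_mono add_mono) auto
    also have "\<dots> = 2 * (s^2 * (s + 1)) - 2 * s^2" by (simp add: power2_eq_square algebra_simps)
    finally show "r * s * (s + r) \<le> 2 * (s^2 * (s + 1))"
      using zero_le_power2[of s] by linarith
  qed (use \<open>1 \<le> r\<close> \<open>1 < s\<close> in auto)
  also have "\<dots> = (s - r) * (s + r) / (r * s * (s + r))"
    using s2 r2 by (simp add: power2_eq_square algebra_simps)
  also have "\<dots> = (s - r) / (r * s)"
    using \<open>1 \<le> r\<close> \<open>1 < s\<close> by simp
  also have "\<dots> = 1 / r - 1 / s"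
    using \<open>1 \<le> r\<close> \<open>1 < s\<close> by (simp add: diff_divide_distrib)
  finally show ?thesis unfolding r_def s_def .
qed

lemma sum_sqrt_excess_odd_interval_le:
  assumes "1 \<le> j"
  shows "(\<Sum>i=j..<j+K. sqrt_excess (2*i+1)) \<le> 1 / sqrt (real (2*j) - 1) - 1 / sqrt (real (2*(j+K)) - 1)"
proof (induction K)
  case (Suc K)
  have "sqrt_excess (2*(j+K)+1) \<le> 1 / sqrt (real (2*(j+K)) - 1) - 1 / sqrt (real (2*(j+Suc K)) - 1)"
    using sqrt_excess_le_telescope[of "2*(j+K)+1"] assms by (simp add: algebra_simps)
  then show ?case using Suc by simp
qed simp

lemma sum_sqrt_excess_odd_le:
  assumes "finite T" "\<forall>m\<in>T. odd m \<and> 2*j+1 \<le> m" "1 \<le> j"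
  shows "(\<Sum>m\<in>T. sqrt_excess m) \<le> 1 / sqrt (real (2*j) - 1)"
proof -
  obtain K where "T \<subseteq> {..<K}" using finite_nat_bounded[OF assms(1)] by blast
  have "T \<subseteq> (\<lambda>i. 2*i+1) ` {j..<j+K}"
  proof
    fix m assume "m \<in> T"
    then obtain i where i: "m = 2*i+1" using assms(2) oddE by blast
    have "j \<le> i" "i < j + K" using \<open>m \<in> T\<close> \<open>T \<subseteq> {..<K}\<close> assms(2) i by auto
    then show "m \<in> (\<lambda>i. 2*i+1) ` {j..<j+K}" using i by auto
  qed
  then have "(\<Sum>m\<in>T. sqrt_excess m) \<le> (\<Sum>m\<in>(\<lambda>i. 2*i+1) ` {j..<j+K}. sqrt_excess m)"
    by (intro sum_mono2) (auto intro: sqrt_excess_nonneg)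
  also have "\<dots> = (\<Sum>i=j..<j+K. sqrt_excess (2*i+1))"
    by (simp add: sum.reindex inj_on_def)
  also have "\<dots> \<le> 1 / sqrt (real (2*j) - 1) - 1 / sqrt (real (2*(j+K)) - 1)"
    by (rule sum_sqrt_excess_odd_interval_le[OF assms(3)])
  also have "\<dots> \<le> 1 / sqrt (real (2*j) - 1)" using assms(3) by simp
  finally show ?thesis .
qed

lemma sum_sqrt_excess_primes_7_to_47_le:
  "(\<Sum>p\<in>{7,11,13,17,19,23,29,31,37,41,43,47::nat}. sqrt_excess p) \<le> 0.129"
  using sqrt_excess_le[of 7 "2.6459"] sqrt_excess_le[of 11 "3.3167"] sqrt_excess_le[of 13 "3.6056"]
    sqrt_excess_le[of 17 "4.1232"] sqrt_excess_le[of 19 "4.3589"] sqrt_excess_le[of 23 "4.7959"]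
    sqrt_excess_le[of 29 "5.3852"] sqrt_excess_le[of 31 "5.5678"] sqrt_excess_le[of 37 "6.0828"]
    sqrt_excess_le[of 41 "6.4032"] sqrt_excess_le[of 43 "6.5575"] sqrt_excess_le[of 47 "6.8557"]
  by (simp add: power2_eq_square)

lemma prime_le_47_cases:
  fixes p :: nat
  assumes "prime p" "p \<le> 47" "p \<notin> {2,3,5}"
  shows "p \<in> {7,11,13,17,19,23,29,31,37,41,43,47}"
proof -
  have "\<not> 2 dvd p" "\<not> 3 dvd p" "\<not> 5 dvd p"
    using assms primes_dvd_imp_eq[of 2 p] primes_dvd_imp_eq[of 3 p] primes_dvd_imp_eq[of 5 p]
    by auto
  moreover have "2 \<le> p" using assms prime_ge_2_nat by auto
  ultimately show ?thesis using assms(2) by simp presburger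
qed

lemma sum_sqrt_excess_primes_le:
  assumes "finite L" "\<forall>p\<in>L. prime p" "L \<inter> {2,3,5} = {}"
  shows "(\<Sum>p\<in>L. sqrt_excess p) \<le> 0.2749"
proof -
  define E where "E = ({7,11,13,17,19,23,29,31,37,41,43,47} :: nat set)"
  define T where "T = {p\<in>L. 47 < p}"
  have "finite T" "E \<inter> T = {}" unfolding E_def T_def using assms(1) by auto
  have "L \<subseteq> E \<union> T"
  proof
    fix p assume "p \<in> L"
    then have "prime p" "p \<notin> {2,3,5}" using assms by auto
    then show "p \<in> E \<union> T"
      using \<open>p \<in> L\<close> prime_le_47_cases[of p] unfolding E_def T_def by (cases "p \<le> 47") auto
  qed
  then have "(\<Sum>p\<in>L. sqrt_excess p) \<le> (\<Sum>p\<in>E \<union> T. sqrt_excess p)"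
    using \<open>finite T\<close> by (intro sum_mono2) (simp_all add: E_def sqrt_excess_nonneg)
  also have "\<dots> = (\<Sum>p\<in>E. sqrt_excess p) + (\<Sum>p\<in>T. sqrt_excess p)"
    using \<open>finite T\<close> \<open>E \<inter> T = {}\<close> by (intro sum.union_disjoint) (simp_all add: E_def)
  also have "(\<Sum>p\<in>E. sqrt_excess p) \<le> 0.129"
    unfolding E_def by (rule sum_sqrt_excess_primes_7_to_47_le)
  also have "(\<Sum>p\<in>T. sqrt_excess p) \<le> 1 / sqrt (real (2*24) - 1)"
  proof (rule sum_sqrt_excess_odd_le[OF \<open>finite T\<close>])
    show "\<forall>m\<in>T. odd m \<and> 2*24+1 \<le> m"
    proof
      fix m assume "m \<in> T"
      then have "prime m" "47 < m" using assms(2) unfolding T_def by auto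
      then have "odd m" using prime_odd_nat[of m] by simp
      with \<open>47 < m\<close> show "odd m \<and> 2*24+1 \<le> m" by presburger
    qed
  qed simp
  also have "1 / sqrt (real (2*24) - 1) \<le> 0.1459"
    using real_le_rsqrt[of "6.8541" 47] by (simp add: field_simps power2_eq_square)
  finally show ?thesis by simp
qed

lemma artin_partial_mult_sqrt_prod_le:
  assumes "finite L" "\<forall>p\<in>L. prime p" "L \<inter> {2,3,5} = {}"
  shows "(\<Prod>p\<in>{2,3,5} \<union> L. 1 - 1 / (real p * (real p - 1)))
      * (\<Prod>p\<in>L. 1 + sqrt (real p) / ((real p)^2 - real p - 1)) \<le> 19/48 * 1.35063"
proof -
  have "(\<Prod>p\<in>{2,3,5} \<union> L. 1 - 1 / (real p * (real p - 1)))
      * (\<Prod>p\<in>L. 1 + sqrt (real p) / ((real p)^2 - real p - 1))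
    = 19/48 * (\<Prod>p\<in>L. (1 - 1 / (real p * (real p - 1)))
        * (1 + sqrt (real p) / ((real p)^2 - real p - 1)))"
    using assms by (simp add: prod.union_disjoint prod.distrib)
  also have "\<dots> = 19/48 * (\<Prod>p\<in>L. 1 + sqrt_excess p)"
    using assms(2) by (simp add: local_factor_mult_sqrt prime_ge_2_nat)
  also have "(\<Prod>p\<in>L. 1 + sqrt_excess p) \<le> exp (\<Sum>p\<in>L. sqrt_excess p)"
    by (rule prod_le_exp_sum) (rule sqrt_excess_nonneg)
  also have "\<dots> \<le> exp 0.2749"
    using sum_sqrt_excess_primes_le[OF assms] by simp
  also have "\<dots> \<le> 1 + 0.2749 + 0.2749^2" by (rule exp_bound) auto
  also have "\<dots> \<le> 1.35063" by (simp add: power2_eq_square)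
  finally show ?thesis by simp
qed

section \<open>The tail of the series\<close>

lemma scaled_sum_rfun_le_products:
  assumes "0 < n" "5 \<le> M"
  shows "real n * (\<Sum>t=n..M. rfun t)
    \<le> (\<Prod>p | p \<le> M \<and> prime p. 1 + 1 / ((real p)^2 - real p - 1))
      + 1.35 / sqrt (real n)
        * (\<Prod>p\<in>{p. p \<le> M \<and> prime p} - {2,3,5}. 1 + sqrt (real p) / ((real p)^2 - real p - 1))"
proof -
  let ?P = "{p. p \<le> M \<and> prime p}"
  let ?L = "?P - {2,3,5}"
  have "?P = {2,3,5} \<union> ?L" using assms(2) by auto
  have "real n * (\<Sum>t=n..M. rfun t)
      \<le> (\<Sum>U\<in>Pow ?P. subset_weight U * (1 + tail_excess (real n / real (\<Prod>U))))"
    by (rule scaled_sum_rfun_le[OF assms(1)])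
  also have "\<dots> = (\<Sum>U\<in>Pow ?P. subset_weight U)
      + (\<Sum>U\<in>Pow ?P. subset_weight U * tail_excess (real n / real (\<Prod>U)))"
    by (simp add: distrib_left sum.distrib)
  also have "(\<Sum>U\<in>Pow ?P. subset_weight U * tail_excess (real n / real (\<Prod>U)))
      = (\<Sum>U\<in>Pow ?L. subset_weight U * Psi (real n / real (\<Prod>U)))"
    by (subst \<open>?P = {2,3,5} \<union> ?L\<close>, rule sum_Pow_weighted_tail_excess_eq) auto
  also have "\<dots> \<le> 1.35 / sqrt (real n)
      * (\<Prod>p\<in>?L. 1 + sqrt (real p) / ((real p)^2 - real p - 1))"
    by (rule sum_Pow_weighted_Psi_le) (use assms in auto)
  finally show ?thesis by (simp add: sum_Pow_subset_weight)
qed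

lemma partial_artin_mult_bound_le:
  assumes "7 \<le> n" "5 \<le> M"
  shows "(\<Prod>p | p \<le> M \<and> prime p. 1 - 1 / (real p * (real p - 1)))
      * ((\<Prod>p | p \<le> M \<and> prime p. 1 + 1 / ((real p)^2 - real p - 1))
        + 1.35 / sqrt (real n)
          * (\<Prod>p\<in>{p. p \<le> M \<and> prime p} - {2,3,5}. 1 + sqrt (real p) / ((real p)^2 - real p - 1)))
    \<le> 1.275"
proof -
  let ?P = "{p. p \<le> M \<and> prime p}"
  let ?L = "?P - {2,3,5}"
  let ?A = "\<Prod>p\<in>?P. 1 - 1 / (real p * (real p - 1))"
  let ?c = "1.35 / sqrt (real n)"
  have "?A * (\<Prod>p\<in>?P. 1 + 1 / ((real p)^2 - real p - 1)) = 1"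
    unfolding prod.distrib[symmetric]
    by (rule prod.neutral) (auto intro: local_factor_mult_inverse prime_ge_2_nat)
  moreover have "?A * (\<Prod>p\<in>?L. 1 + sqrt (real p) / ((real p)^2 - real p - 1)) \<le> 19/48 * 1.35063"
  proof -
    have "{2,3,5} \<union> ?L = ?P" using assms(2) by auto
    have "(\<Prod>p\<in>{2,3,5} \<union> ?L. 1 - 1 / (real p * (real p - 1)))
        * (\<Prod>p\<in>?L. 1 + sqrt (real p) / ((real p)^2 - real p - 1)) \<le> 19/48 * 1.35063"
      by (rule artin_partial_mult_sqrt_prod_le) auto
    then show ?thesis unfolding \<open>{2,3,5} \<union> ?L = ?P\<close> .
  qed
  then have "?c * (?A * (\<Prod>p\<in>?L. 1 + sqrt (real p) / ((real p)^2 - real p - 1)))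
      \<le> ?c * (19/48 * 1.35063)"
    by (rule mult_left_mono) simp
  moreover have "?c \<le> 1.35 / 2.6457"
    using assms by (intro divide_left_mono real_le_rsqrt) (auto simp: power2_eq_square)
  then have "?c * (19/48 * 1.35063) \<le> 1.35 / 2.6457 * (19/48 * 1.35063)"
    by (rule mult_right_mono) simp
  ultimately show ?thesis by (simp add: distrib_left mult_ac)
qed

lemma artinA_mult_scaled_sum_rfun_le:
  assumes "7 \<le> n" "finite G" "G \<subseteq> {n..}"
  shows "artinA * (real n * (\<Sum>t\<in>G. rfun t)) \<le> 1.275"
proof -
  define M where "M = max 5 (Max (insert n G))"
  let ?A = "\<Prod>p | p \<le> M \<and> prime p. 1 - 1 / (real p * (real p - 1))"
  have "G \<subseteq> {n..M}"
  proof
    fix t assume "t \<in> G"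
    then have "t \<le> Max (insert n G)" using assms(2) by (intro Max_ge) auto
    then show "t \<in> {n..M}" using \<open>t \<in> G\<close> assms(3) unfolding M_def by auto
  qed
  have "0 \<le> ?A" by (rule prod_artin_factors_nonneg) simp
  have "0 \<le> real n * (\<Sum>t\<in>G. rfun t)" by (simp add: sum_nonneg rfun_nonneg)
  then have "artinA * (real n * (\<Sum>t\<in>G. rfun t)) \<le> ?A * (real n * (\<Sum>t\<in>G. rfun t))"
    by (rule mult_right_mono[OF artinA_le_prod_primes])
  also have "\<dots> \<le> ?A * (real n * (\<Sum>t=n..M. rfun t))"
    using \<open>G \<subseteq> {n..M}\<close> \<open>0 \<le> ?A\<close> by (intro mult_left_mono sum_mono2) (auto intro: rfun_nonneg)
  also have "\<dots> \<le> ?A * ((\<Prod>p | p \<le> M \<and> prime p. 1 + 1 / ((real p)^2 - real p - 1))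
      + 1.35 / sqrt (real n)
        * (\<Prod>p\<in>{p. p \<le> M \<and> prime p} - {2,3,5}. 1 + sqrt (real p) / ((real p)^2 - real p - 1)))"
    using \<open>0 \<le> ?A\<close> assms(1) by (intro mult_left_mono scaled_sum_rfun_le_products) (auto simp: M_def)
  also have "\<dots> \<le> 1.275"
    using assms(1) by (rule partial_artin_mult_bound_le) (simp add: M_def)
  finally show ?thesis .
qed

lemma rfun_summable_on_and_infsum_le:
  assumes "7 \<le> n" "T \<subseteq> {n..}"
  shows "rfun summable_on T" "artinA * infsum rfun T \<le> 1.275 / real n"
proof -
  have bound: "sum rfun G \<le> 1.275 / (artinA * real n)" if "finite G" "G \<subseteq> T" for G
  proof -
    have "artinA * (real n * sum rfun G) \<le> 1.275"
      using that assms by (intro artinA_mult_scaled_sum_rfun_le) auto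
    then show ?thesis using artinA_pos assms by (simp add: field_simps)
  qed
  show "rfun summable_on T"
    by (rule nonneg_bdd_above_summable_on, simp add: rfun_nonneg,
        rule bdd_aboveI[where M = "1.275 / (artinA * real n)"]) (use bound in auto)
  then have "infsum rfun T \<le> 1.275 / (artinA * real n)"
    by (rule infsum_le_finite_sums) (use bound in auto)
  then show "artinA * infsum rfun T \<le> 1.275 / real n"
    using artinA_pos assms by (simp add: field_simps)
qed

lemma cong_int_exists_nat_ge:
  fixes a d :: int
  assumes "1 \<le> d"
  shows "\<exists>t::nat. n \<le> t \<and> [int t = a] (mod d)"
proof
  let ?t = "nat (a mod d) + nat d * n"
  have "int ?t = a mod d + d * int n" using assms by simp
  then have "[int ?t = a] (mod d)" by (simp add: cong_def)
  moreover have "1 \<le> nat d" using assms by simp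
  then have "n \<le> nat d * n" using mult_le_mono1[of 1 "nat d" n] by simp
  then have "n \<le> ?t" by linarith
  ultimately show "n \<le> ?t \<and> [int ?t = a] (mod d)" by blast
qed

lemma rho_minus_partial_sum_eq:
  assumes "rfun summable_on {t::nat. 1 \<le> t \<and> x < real t \<and> [int t = a] (mod d)}"
  shows "rho a d - artinA * (\<Sum>t\<in>{t::nat. 1 \<le> t \<and> real t \<le> x \<and> [int t = a] (mod d)}. rfun t)
    = artinA * infsum rfun {t::nat. 1 \<le> t \<and> x < real t \<and> [int t = a] (mod d)}"
proof -
  let ?F = "{t::nat. 1 \<le> t \<and> real t \<le> x \<and> [int t = a] (mod d)}"
  let ?T = "{t::nat. 1 \<le> t \<and> x < real t \<and> [int t = a] (mod d)}"
  have "?F \<subseteq> {..nat \<lfloor>x\<rfloor>}" by (auto simp: le_nat_iff le_floor_iff)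
  then have "finite ?F" by (rule finite_subset) simp
  moreover have "{t::nat. 1 \<le> t \<and> [int t = a] (mod d)} = ?F \<union> ?T" "?F \<inter> ?T = {}" by auto
  ultimately have "rho a d = artinA * (sum rfun ?F + infsum rfun ?T)"
    unfolding rho_def using infsum_Un_disjoint[OF _ assms, of ?F] by simp
  then show ?thesis by (simp add: algebra_simps)
qed

lemma residue_class_tail_bounds:
  fixes a d :: int and x :: real
  assumes "1 \<le> d" "6 \<le> x"
  defines "T \<equiv> {t::nat. 1 \<le> t \<and> x < real t \<and> [int t = a] (mod d)}"
  shows "rfun summable_on T" "0 < infsum rfun T" "artinA * infsum rfun T < 1.28 / x"
proof -
  define n where "n = nat \<lfloor>x\<rfloor> + 1"
  have "6 \<le> \<lfloor>x\<rfloor>" using assms(2) by (simp add: le_floor_iff)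
  then have "int n = \<lfloor>x\<rfloor> + 1" unfolding n_def by simp
  then have "7 \<le> n" "real n = of_int \<lfloor>x\<rfloor> + 1"
    using \<open>6 \<le> \<lfloor>x\<rfloor>\<close> by (linarith, metis of_int_1 of_int_add of_int_of_nat_eq)
  then have "x < real n" by linarith
  have "T \<subseteq> {n..}"
  proof
    fix t assume "t \<in> T"
    then have "\<lfloor>x\<rfloor> < int t" unfolding T_def by (simp add: floor_less_iff)
    then have "nat \<lfloor>x\<rfloor> < t" using \<open>6 \<le> \<lfloor>x\<rfloor>\<close> by (simp add: nat_less_iff)
    then show "t \<in> {n..}" unfolding n_def by simp
  qed
  note tail = rfun_summable_on_and_infsum_le[OF \<open>7 \<le> n\<close> this]
  then show "rfun summable_on T" by simp
  obtain t where "n \<le> t" "[int t = a] (mod d)"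
    using cong_int_exists_nat_ge assms(1) by blast
  then have "t \<in> T" using \<open>7 \<le> n\<close> \<open>x < real n\<close> unfolding T_def by auto
  then have "rfun t \<le> infsum rfun T"
    using finite_sum_le_infsum[OF tail(1), of "{t}"] rfun_nonneg by simp
  moreover have "0 < rfun t" using \<open>7 \<le> n\<close> \<open>n \<le> t\<close> by (intro rfun_pos) simp
  ultimately show "0 < infsum rfun T" by simp
  have "1.275 / real n < 1.28 / x" using \<open>x < real n\<close> assms(2) by (simp add: field_simps)
  with tail(2) show "artinA * infsum rfun T < 1.28 / x" by simp
qed

theorem mainTheorem17:
  fixes a d :: int and x :: real
  assumes "d \<ge> 1" and "x \<ge> 6"
  shows "0 < rho a d - artinA * (\<Sum>t\<in>{t::nat. 1 \<le> t \<and> real t \<le> x \<and> [int t = a] (mod d)}. rfun t)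
       \<and> rho a d - artinA * (\<Sum>t\<in>{t::nat. 1 \<le> t \<and> real t \<le> x \<and> [int t = a] (mod d)}. rfun t)
           < 1.28 / x"
proof -
  note tail = residue_class_tail_bounds[OF assms, of a]
  show ?thesis
    unfolding rho_minus_partial_sum_eq[OF tail(1)] using tail(2,3) artinA_pos by simp
qed

end
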